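(* Let $A$ be a finite alphabet and $P\in I(A^* )$ defined by $P(u,v)=\binom{v}{u}$. For all $u,v\in A^*$ and every integer $d$ (for $d<0$, $P^d$ means $(P^{-1})^{-d}$, and $P^0=\delta$), $$P^d(u,v)=d^{|v|-|u|}P(u,v),$$ with the convention $0^0=1$. Equivalently, for $d\ne0$, letting $D_d\in I(A^* )$ be $D_d(u,v)=d^{|u|}\delta(u,v)$, one has $P^d=D_d^{-1}PD_d=D_{1/d}PD_d$; in particular $P^{-1}=D_{-1}PD_{-1}$.
   Context: $A^*$ is the set of finite words over $A$; $|w|$ is the length. For words $u=a_1\cdots a_k$, $v=b_1\cdots b_n$, $\binom{v}{u}$ is the number of order-preserving injections $\varphi:[k]\to[n]$ with $a_i=b_{\varphi(i)}$ for all $i$. $A^*$ is ordered by $u\le v$ iff $\binom{v}{u}>0$. $I(A^* )$ is the incidence algebra over $\mathbb{Q}$: functions on pairs $(u,v)$ with $u\le v$, convolution $(FG)(u,v)=\sum_{u\le w\le v}F(u,w)G(w,v)$, identity $\delta(u,v)=[u=v]$ (Iverson bracket). $P$ is invertible since $P(u,u)=1$. *)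

theory Defs
  imports Complex_Main
begin

text \<open>Words over an alphabet are lists over a finite type 'a.
  An embedding of u into v is encoded by the strictly increasing list of
  positions phi(1) < ... < phi(k) in v.\<close>

definition embeddings :: "'a list \<Rightarrow> 'a list \<Rightarrow> nat list set" where
  "embeddings v u = {is. length is = length u \<and> sorted_wrt (<) is \<and>
      (\<forall>i<length u. is ! i < length v \<and> u ! i = v ! (is ! i))}"

definition binom :: "'a list \<Rightarrow> 'a list \<Rightarrow> nat" where
  "binom v u = card (embeddings v u)"

definition wle :: "'a list \<Rightarrow> 'a list \<Rightarrow> bool" where
  "wle u v \<longleftrightarrow> binom v u > 0"

type_synonym 'a inc = "'a list \<Rightarrow> 'a list \<Rightarrow> rat"

definition inc_alg :: "'a inc set" where
  "inc_alg = {F. \<forall>u v. \<not> wle u v \<longrightarrow> F u v = 0}"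

definition conv :: "'a inc \<Rightarrow> 'a inc \<Rightarrow> 'a inc" where
  "conv F G u v = (\<Sum>w\<in>{w. wle u w \<and> wle w v}. F u w * G w v)"

definition delta :: "'a inc" where
  "delta u v = (if u = v then 1 else 0)"

fun conv_pow :: "'a inc \<Rightarrow> nat \<Rightarrow> 'a inc" where
  "conv_pow F 0 = delta"
| "conv_pow F (Suc n) = conv F (conv_pow F n)"

definition inc_inv :: "'a inc \<Rightarrow> 'a inc" where
  "inc_inv F = (THE G. G \<in> inc_alg \<and> conv F G = delta \<and> conv G F = delta)"

definition int_pow :: "'a inc \<Rightarrow> int \<Rightarrow> 'a inc" where
  "int_pow F d = (if 0 \<le> d then conv_pow F (nat d) else conv_pow (inc_inv F) (nat (- d)))"

definition Pmat :: "'a inc" where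
  "Pmat u v = of_nat (binom v u)"

definition Dmat :: "rat \<Rightarrow> 'a inc" where
  "Dmat c u v = (if u = v then c ^ length u else 0)"

end

theory Submission
  imports Defs
begin

text \<open>For rational \<open>x\<close> put \<open>P_x(u,v) = x^(|v|-|u|) binom(v,u)\<close> (\<open>Ppow x\<close> below).
  These form a one-parameter group, \<open>P_x P_y = P_(x+y)\<close>: by induction on \<open>v\<close>, both sides
  satisfy the same recursion in the first letter of \<open>v\<close>, inherited from the Pascal rule
  \<open>binom(av, bu) = binom(v, bu) + [a = b] binom(v, u)\<close>. Since \<open>P_0 = \<delta>\<close> and \<open>P_1 = P\<close>,
  this gives \<open>P^d = P_d\<close> for every integer \<open>d\<close>. Conjugating \<open>P\<close> by the diagonal matrix
  \<open>D_d\<close> multiplies the \<open>(u,v)\<close> entry by \<open>d^(|v|-|u|)\<close>, so \<open>P_d = D_d\<^sup>-\<^sup>1 P D_d\<close>.\<close>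

lemma finite_embeddings: "finite (embeddings v u)"
proof -
  have "embeddings v u \<subseteq> {xs. set xs \<subseteq> {..<length v} \<and> length xs = length u}"
    by (auto simp: embeddings_def in_set_conv_nth)
  thus ?thesis by (rule finite_subset) (rule finite_lists_length_eq, simp)
qed

lemma embeddings_Nil: "embeddings v [] = {[]}"
  by (auto simp: embeddings_def)

lemma embeddings_Nil_Cons: "embeddings [] (b # u) = {}"
  by (auto simp: embeddings_def)

lemma map_Suc_in_embeddings_Cons_iff:
  "map Suc ks \<in> embeddings (a # v) u \<longleftrightarrow> ks \<in> embeddings v u"
  by (auto simp: embeddings_def sorted_wrt_map)

lemma zero_map_Suc_in_embeddings_Cons_iff:
  "0 # map Suc ks \<in> embeddings (a # v) (b # u) \<longleftrightarrow> a = b \<and> ks \<in> embeddings v u"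
  by (auto simp: embeddings_def sorted_wrt_map All_less_Suc2)

lemma embeddings_Cons_cases:
  assumes "xs \<in> embeddings (a # v) (b # u)"
  obtains ks where "xs = map Suc ks" | ks where "xs = 0 # map Suc ks"
proof -
  have shift: "\<forall>x\<in>set ys. 0 < x \<Longrightarrow> ys = map Suc (map (\<lambda>x. x - 1) ys)" for ys :: "nat list"
    by (induct ys) auto
  from assms obtain j js where xs: "xs = j # js" and js: "\<forall>y\<in>set js. j < y"
    by (cases xs) (auto simp: embeddings_def)
  show ?thesis
  proof (cases "j = 0")
    case True
    with js have "js = map Suc (map (\<lambda>x. x - 1) js)" by (intro shift) auto
    with True xs that(2) show ?thesis by metis
  next
    case False
    with js xs have "xs = map Suc (map (\<lambda>x. x - 1) xs)" by (intro shift) auto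
    with that(1) show ?thesis by metis
  qed
qed

lemma embeddings_Cons_Cons:
  "embeddings (a # v) (b # u) =
     map Suc ` embeddings v (b # u) \<union>
     (if a = b then (\<lambda>ks. 0 # map Suc ks) ` embeddings v u else {})"
proof (intro equalityI subsetI)
  fix xs assume xs: "xs \<in> embeddings (a # v) (b # u)"
  then show "xs \<in> map Suc ` embeddings v (b # u) \<union>
     (if a = b then (\<lambda>ks. 0 # map Suc ks) ` embeddings v u else {})"
    by (cases rule: embeddings_Cons_cases)
       (use xs in \<open>auto simp: map_Suc_in_embeddings_Cons_iff zero_map_Suc_in_embeddings_Cons_iff\<close>)
qed (auto simp: map_Suc_in_embeddings_Cons_iff zero_map_Suc_in_embeddings_Cons_iff split: if_splits)

lemma embeddings_comp:
  assumes "is \<in> embeddings w u" and "js \<in> embeddings v w"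
  shows "map ((!) js) is \<in> embeddings v u"
  using assms unfolding embeddings_def
  by (auto simp: sorted_wrt_map sorted_wrt_iff_nth_less)

lemma binom_Nil [simp]: "binom v [] = 1"
  by (simp add: binom_def embeddings_Nil)

lemma binom_Nil_Cons [simp]: "binom [] (b # u) = 0"
  by (simp add: binom_def embeddings_Nil_Cons)

lemma binom_Cons_Cons:
  "binom (a # v) (b # u) = binom v (b # u) + (if a = b then binom v u else 0)"
proof -
  have "inj_on (map Suc) A" for A :: "nat list set"
    by (rule inj_on_subset[OF inj_mapI]) (auto simp: inj_def)
  moreover have "inj_on (\<lambda>ks. 0 # map Suc ks) A" for A :: "nat list set"
    using inj_mapI[of Suc] by (auto simp: inj_on_def inj_def)
  moreover have "map Suc ` A \<inter> (\<lambda>ks. 0 # map Suc ks) ` B = {}" for A B :: "nat list set"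
    by (auto simp: Cons_eq_map_conv)
  ultimately show ?thesis
    unfolding binom_def embeddings_Cons_Cons
    by (simp add: card_Un_disjoint finite_embeddings card_image)
qed

lemma binom_pos_imp_length_le: "binom v u > 0 \<Longrightarrow> length u \<le> length v"
proof (induct v arbitrary: u)
  case Nil thus ?case by (cases u) auto
next
  case (Cons a v)
  show ?case
  proof (cases u)
    case (Cons b u')
    with Cons.prems have "0 < binom v (b # u') \<or> 0 < binom v u'"
      by (auto simp: binom_Cons_Cons split: if_splits)
    thus ?thesis using Cons.hyps[of "b # u'"] Cons.hyps[of u'] Cons by auto
  qed simp
qed

lemma binom_same_length: "length u = length v \<Longrightarrow> binom v u = (if u = v then 1 else 0)"
proof (induct v arbitrary: u)
  case Nil thus ?case by auto
next
  case (Cons a v)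
  then obtain b u' where u: "u = b # u'" "length u' = length v" by (cases u) auto
  with binom_pos_imp_length_le[of v "b # u'"] have "binom v (b # u') = 0" by auto
  with u Cons show ?case by (simp add: binom_Cons_Cons)
qed

lemma wle_length: "wle u v \<Longrightarrow> length u \<le> length v"
  by (simp add: wle_def binom_pos_imp_length_le)

lemma wle_refl: "wle u u"
  by (simp add: wle_def binom_same_length)

lemma wle_iff_embeddings_nonempty: "wle u v \<longleftrightarrow> embeddings v u \<noteq> {}"
  by (simp add: wle_def binom_def card_gt_0_iff finite_embeddings)

lemma wle_trans: "wle u w \<Longrightarrow> wle w v \<Longrightarrow> wle u v"
  by (auto simp: wle_iff_embeddings_nonempty dest: embeddings_comp)

abbreviation wint :: "'a list \<Rightarrow> 'a list \<Rightarrow> 'a list set" where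
  "wint u v \<equiv> {w. wle u w \<and> wle w v}"

definition words_upto :: "nat \<Rightarrow> 'a list set" where
  "words_upto n = {w. length w \<le> n}"

lemma finite_words_upto: "finite (words_upto n :: 'a::finite list set)"
  using finite_lists_length_le[of "UNIV :: 'a set" n] by (simp add: words_upto_def)

lemma wint_subset_words_upto: "wint u v \<subseteq> words_upto (length v)"
  by (auto simp: words_upto_def dest: wle_length)

lemma finite_wint: "finite (wint u (v :: 'a::finite list))"
  using finite_subset[OF wint_subset_words_upto finite_words_upto] .

lemma wint_restrict: "w \<in> wint u v \<Longrightarrow> wint u w = {z \<in> wint u v. wle z w}"
  "z \<in> wint u v \<Longrightarrow> wint z v = {w \<in> wint u v. wle z w}"
  by (auto dest: wle_trans)

lemma conv_assoc: "conv (conv F G) H = conv F (conv G H :: 'a::finite inc)"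
proof (intro ext)
  fix u v :: "'a list"
  have "conv (conv F G) H u v =
      (\<Sum>w\<in>wint u v. \<Sum>z\<in>{z \<in> wint u v. wle z w}. F u z * G z w * H w v)"
    unfolding conv_def by (auto simp: sum_distrib_right wint_restrict(1) intro!: sum.cong dest: wle_trans)
  also have "\<dots> = (\<Sum>z\<in>wint u v. \<Sum>w\<in>{w \<in> wint u v. wle z w}. F u z * G z w * H w v)"
    by (rule sum.swap_restrict[OF finite_wint finite_wint])
  also have "\<dots> = conv F (conv G H) u v"
    unfolding conv_def by (auto simp: sum_distrib_left mult.assoc wint_restrict(2) intro!: sum.cong dest: wle_trans)
  finally show "conv (conv F G) H u v = conv F (conv G H) u v" .
qed

lemma conv_diagonal_left:
  assumes "\<And>w. w \<noteq> u \<Longrightarrow> F u w = 0"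
  shows "conv F G u (v :: 'a::finite list) = (if wle u v then F u u * G u v else 0)"
proof -
  have "conv F G u v = (\<Sum>w\<in>wint u v. if w = u then F u u * G u v else 0)"
    unfolding conv_def using assms by (intro sum.cong) auto
  also have "\<dots> = (if wle u v then F u u * G u v else 0)"
    using finite_wint[of u v] by (simp add: wle_refl)
  finally show ?thesis .
qed

lemma conv_diagonal_right:
  assumes "\<And>w. w \<noteq> v \<Longrightarrow> G w v = 0"
  shows "conv F G u (v :: 'a::finite list) = (if wle u v then F u v * G v v else 0)"
proof -
  have "conv F G u v = (\<Sum>w\<in>wint u v. if w = v then F u v * G v v else 0)"
    unfolding conv_def using assms by (intro sum.cong) auto
  also have "\<dots> = (if wle u v then F u v * G v v else 0)"
    using finite_wint[of u v] by (simp add: wle_refl)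
  finally show ?thesis .
qed

lemma conv_delta_left: "G \<in> inc_alg \<Longrightarrow> conv delta G = (G :: 'a::finite inc)"
  by (intro ext) (auto simp: conv_diagonal_left delta_def inc_alg_def)

lemma conv_delta_right: "G \<in> inc_alg \<Longrightarrow> conv G delta = (G :: 'a::finite inc)"
  by (intro ext) (auto simp: conv_diagonal_right delta_def inc_alg_def)

lemma inc_inv_eqI:
  assumes H: "H \<in> inc_alg" and FH: "conv F H = delta" and HF: "conv H F = (delta :: 'a::finite inc)"
  shows "inc_inv F = H"
  unfolding inc_inv_def
proof (rule the_equality)
  fix G assume G: "G \<in> inc_alg \<and> conv F G = delta \<and> conv G F = delta"
  then have "G = conv G (conv F H)"
    by (simp add: FH conv_delta_right)
  also have "\<dots> = conv (conv G F) H" by (simp add: conv_assoc)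
  also have "\<dots> = H" using G conv_delta_left[OF H] by simp
  finally show "G = H" .
qed (use assms in simp)

lemma Dmat_in_inc_alg: "Dmat c \<in> inc_alg"
  by (auto simp: inc_alg_def Dmat_def wle_refl)

lemma conv_Dmat_left:
  "conv (Dmat c) F u (v :: 'a::finite list) = (if wle u v then c ^ length u * F u v else 0)"
  by (simp add: conv_diagonal_left Dmat_def)

lemma conv_Dmat_right:
  "conv F (Dmat c) u (v :: 'a::finite list) = (if wle u v then F u v * c ^ length v else 0)"
  by (simp add: conv_diagonal_right Dmat_def)

lemma conv_Dmat_Dmat: "conv (Dmat a) (Dmat b) = (Dmat (a * b) :: 'a::finite inc)"
  by (intro ext) (auto simp: conv_Dmat_left Dmat_def power_mult_distrib wle_refl)

lemma Dmat_1: "Dmat 1 = delta"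
  by (intro ext) (simp add: delta_def Dmat_def)

lemma inc_inv_Dmat: "c \<noteq> 0 \<Longrightarrow> inc_inv (Dmat c) = (Dmat (1 / c) :: 'a::finite inc)"
  by (rule inc_inv_eqI) (simp_all add: Dmat_in_inc_alg conv_Dmat_Dmat Dmat_1)

definition Ppow :: "rat \<Rightarrow> 'a inc" where
  "Ppow x u v = x ^ (length v - length u) * of_nat (binom v u)"

lemma Ppow_eq_0: "\<not> wle u v \<Longrightarrow> Ppow x u v = 0"
  by (simp add: wle_def Ppow_def)

lemma Ppow_in_inc_alg: "Ppow x \<in> inc_alg"
  by (auto simp: inc_alg_def Ppow_eq_0)

lemma Ppow_Nil_right: "Ppow y w [] = (if w = [] then 1 else 0)"
  by (cases w) (auto simp: Ppow_def)

lemma Ppow_Cons_right: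
  "Ppow y w (a # v) =
     y * Ppow y w v + (case w of [] \<Rightarrow> 0 | c # w' \<Rightarrow> if a = c then Ppow y w' v else 0)"
proof (cases w)
  case Nil thus ?thesis by (simp add: Ppow_def binom_Cons_Cons)
next
  case (Cons c w')
  have "y ^ (Suc (length v) - length w) * of_nat (binom v w) = y * Ppow y w v"
  proof (cases "binom v w = 0")
    case False
    then have "length w \<le> length v" by (simp add: binom_pos_imp_length_le)
    then have "Suc (length v) - length w = Suc (length v - length w)" by simp
    thus ?thesis by (simp add: Ppow_def)
  qed (simp add: Ppow_def)
  with Cons show ?thesis by (simp add: Ppow_def binom_Cons_Cons distrib_left)
qed

lemma sum_words_upto_Suc_Cons:
  "(\<Sum>w\<in>words_upto (Suc m). case w of [] \<Rightarrow> 0 | c # w' \<Rightarrow> if a = c then g w' else 0) =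
   (\<Sum>w\<in>(words_upto m :: 'a::finite list set). g w :: 'b::comm_monoid_add)" (is "sum ?f _ = _")
proof -
  have "sum ?f (words_upto (Suc m)) = sum ?f (Cons a ` words_upto m)"
    by (rule sum.mono_neutral_right[OF finite_words_upto])
       (auto simp: words_upto_def split: list.splits)
  also have "\<dots> = (\<Sum>w\<in>words_upto m. g w)" by (subst sum.reindex) auto
  finally show ?thesis .
qed

text \<open>Summing over all words of bounded length rather than over the interval keeps the
  range of summation fixed along the induction on \<open>v\<close>.\<close>
lemma sum_Ppow_mult_Ppow:
  "length v \<le> n \<Longrightarrow> (\<Sum>w\<in>words_upto n. Ppow x u w * Ppow y w v) = Ppow (x + y) u (v :: 'a::finite list)"
proof (induct v arbitrary: u n)
  case Nil
  have "(\<Sum>w\<in>words_upto n. Ppow x u w * Ppow y w []) =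
        (\<Sum>w\<in>words_upto n. if w = ([] :: 'a list) then Ppow x u [] else 0)"
    by (rule sum.cong) (auto simp: Ppow_Nil_right)
  also have "\<dots> = Ppow x u []" by (simp add: finite_words_upto, simp add: words_upto_def)
  finally show ?case by (simp add: Ppow_def)
next
  case (Cons a v)
  then obtain m where n: "n = Suc m" and m: "length v \<le> m" by (cases n) auto
  have IH: "(\<Sum>w\<in>words_upto k. Ppow x u' w * Ppow y w v) = Ppow (x + y) u' v"
    if "length v \<le> k" for k u' using Cons.hyps that .
  have "(\<Sum>w\<in>words_upto n. Ppow x u w * Ppow y w (a # v)) =
        y * (\<Sum>w\<in>words_upto n. Ppow x u w * Ppow y w v) +
        (\<Sum>w\<in>words_upto n. case w of [] \<Rightarrow> 0 | c # w' \<Rightarrow>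
            if a = c then Ppow x u (a # w') * Ppow y w' v else 0)"
    by (auto simp: Ppow_Cons_right distrib_left sum.distrib sum_distrib_left
        mult.assoc mult.left_commute split: list.splits intro!: sum.cong)
  also have "\<dots> = y * Ppow (x + y) u v + (\<Sum>w\<in>words_upto m. Ppow x u (a # w) * Ppow y w v)"
    using IH[of n u] Cons.prems by (simp add: n sum_words_upto_Suc_Cons)
  also have "(\<Sum>w\<in>words_upto m. Ppow x u (a # w) * Ppow y w v) =
      x * (\<Sum>w\<in>words_upto m. Ppow x u w * Ppow y w v) +
      (case u of [] \<Rightarrow> 0 | b # u' \<Rightarrow>
         if a = b then (\<Sum>w\<in>words_upto m. Ppow x u' w * Ppow y w v) else 0)"
    by (simp add: Ppow_Cons_right distrib_right sum.distrib sum_distrib_left mult.assoc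
        split: list.splits)
  also have "\<dots> = x * Ppow (x + y) u v +
      (case u of [] \<Rightarrow> 0 | b # u' \<Rightarrow> if a = b then Ppow (x + y) u' v else 0)"
    using IH m by (simp split: list.splits)
  finally show ?case by (simp add: Ppow_Cons_right[of "x + y"] distrib_right)
qed

lemma conv_Ppow_Ppow: "conv (Ppow x) (Ppow y) = (Ppow (x + y) :: 'a::finite inc)"
proof (intro ext)
  fix u v :: "'a list"
  have "conv (Ppow x) (Ppow y) u v = (\<Sum>w\<in>words_upto (length v). Ppow x u w * Ppow y w v)"
    unfolding conv_def
    by (rule sum.mono_neutral_left[OF finite_words_upto wint_subset_words_upto])
       (auto simp: Ppow_def wle_def)
  also have "\<dots> = Ppow (x + y) u v" by (rule sum_Ppow_mult_Ppow) simp
  finally show "conv (Ppow x) (Ppow y) u v = Ppow (x + y) u v" .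
qed

lemma Ppow_0: "Ppow 0 = (delta :: 'a inc)"
proof (intro ext)
  fix u v :: "'a list"
  show "Ppow 0 u v = delta u v"
  proof (cases "length u = length v")
    case True thus ?thesis by (simp add: Ppow_def delta_def binom_same_length)
  next
    case False
    then have "binom v u = 0 \<or> length u < length v"
      using binom_pos_imp_length_le[of v u] by linarith
    with False show ?thesis by (auto simp: Ppow_def delta_def)
  qed
qed

lemma Ppow_1: "Ppow 1 = Pmat"
  by (intro ext) (simp add: Pmat_def Ppow_def)

lemma conv_pow_Ppow: "conv_pow (Ppow x) n = (Ppow (of_nat n * x) :: 'a::finite inc)"
  by (induct n) (simp_all add: Ppow_0 conv_Ppow_Ppow algebra_simps)

lemma inc_inv_Pmat: "inc_inv Pmat = (Ppow (-1) :: 'a::finite inc)"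
  by (rule inc_inv_eqI) (simp_all add: Ppow_in_inc_alg flip: Ppow_1 add: conv_Ppow_Ppow Ppow_0)

lemma int_pow_Pmat: "int_pow Pmat d = (Ppow (of_int d) :: 'a::finite inc)"
proof (cases "0 \<le> d")
  case True thus ?thesis by (simp add: int_pow_def conv_pow_Ppow flip: Ppow_1)
next
  case False thus ?thesis by (simp add: int_pow_def inc_inv_Pmat conv_pow_Ppow)
qed

lemma Dmat_conj_Pmat:
  assumes "c \<noteq> 0"
  shows "conv (Dmat (1 / c)) (conv Pmat (Dmat c)) = (Ppow c :: 'a::finite inc)"
proof (intro ext)
  fix u v :: "'a list"
  show "conv (Dmat (1 / c)) (conv Pmat (Dmat c)) u v = Ppow c u v"
  proof (cases "wle u v")
    case True
    then have "c ^ length v = c ^ (length v - length u) * c ^ length u"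
      by (simp add: wle_length flip: power_add)
    then have "(1 / c) ^ length u * c ^ length v = c ^ (length v - length u)"
      using assms by (simp add: power_one_over field_simps)
    with True show ?thesis
      by (simp add: conv_Dmat_left conv_Dmat_right Pmat_def Ppow_def algebra_simps)
  qed (simp add: conv_Dmat_left Ppow_eq_0)
qed

theorem mainTheorem5:
  fixes d :: int
  shows "(\<forall>(u::'a::finite list) v.
            int_pow Pmat d u v = (of_int d) ^ (length v - length u) * Pmat u v)
       \<and> (d \<noteq> 0 \<longrightarrow>
            inc_inv (Dmat (of_int d)) = (Dmat (1 / of_int d) :: 'a inc)
          \<and> int_pow (Pmat :: 'a inc) d = conv (Dmat (1 / of_int d)) (conv Pmat (Dmat (of_int d)))
          \<and> inc_inv (Pmat :: 'a inc) = conv (Dmat (-1)) (conv Pmat (Dmat (-1))))"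
proof (intro conjI allI impI)
  fix u v :: "'a list"
  show "int_pow Pmat d u v = of_int d ^ (length v - length u) * Pmat u v"
    by (simp add: int_pow_Pmat Ppow_def Pmat_def)
next
  assume "d \<noteq> 0"
  then have d: "(of_int d :: rat) \<noteq> 0" by simp
  show "inc_inv (Dmat (of_int d)) = (Dmat (1 / of_int d) :: 'a inc)"
    using inc_inv_Dmat[OF d] .
  show "int_pow (Pmat :: 'a inc) d = conv (Dmat (1 / of_int d)) (conv Pmat (Dmat (of_int d)))"
    by (simp add: int_pow_Pmat Dmat_conj_Pmat[OF d])
  show "inc_inv (Pmat :: 'a inc) = conv (Dmat (-1)) (conv Pmat (Dmat (-1)))"
    using Dmat_conj_Pmat[of "-1", where 'a = 'a] by (simp add: inc_inv_Pmat)
qed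

end
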